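(* Let $(E,\mathcal L)$ be a simple COM with tope set $\mathcal T$ and tope graph $G$. Then $$\mathcal L=\{X(G')\mid G'\text{ antipodal subgraph of }G\}=\{X(G')\mid G'\text{ antipodal gated subgraph of }G\}=\mathcal L(G),$$ where $\mathcal L(G)=\{X\in\{+,-,0\}^E\mid X\circ(-Y)\in\mathcal T\text{ for all }Y\in\mathcal T\}$. In particular, in the tope graph of a COM all antipodal subgraphs are gated.
   Context: Sign vectors: $E$ finite nonempty, $\emptyset\ne\mathcal L\subseteq\{+,-,0\}^E$; $S(X,Y)=\{e:X_eY_e=-\}$; $(X\circ Y)_e=X_e$ if $X_e\ne0$ else $Y_e$; $(-X)_e=-X_e$. (FS): $X\circ-Y\in\mathcal L$ for all $X,Y\in\mathcal L$. (SE): for $X,Y\in\mathcal L$, $e\in S(X,Y)$ there is $Z\in\mathcal L$ with $Z_e=0$ and $Z_f=(X\circ Y)_f$ for $f\notin S(X,Y)$. A COM satisfies (FS) and (SE). Simple: each coordinate takes all values $+,-,0$ on $\mathcal L$, and for $e\neq f$ there are $X,Y\in\mathcal L$ with $\{X_eX_f,Y_eY_f\}=\{+,-\}$. Topes $\mathcal T=\mathcal L\cap\{+,-\}^E$; the tope graph is the subgraph of the hypercube on $\{+,-\}^E$ induced by $\mathcal T$. For a simple COM the tope graph is an isometric subgraph (partial cube) whose $\Theta$-classes are indexed by $E$: the class of $e$ consists of the edges joining topes that differ exactly in coordinate $e$, and its halfspaces are the topes with $e$-coordinate $+$ resp. $-$. For a convex subgraph $G'$ of $G$, $X(G')\in\{+,-,0\}^E$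 has $X(G')_e=+$ (resp. $-$) if all vertices of $G'$ have $e$-coordinate $+$ (resp. $-$), and $0$ otherwise. A subgraph is convex if it contains all shortest paths between its vertices; $\mathrm{conv}(S)$ is the smallest convex subgraph containing $S$. For a subgraph $H$ and $x\in H$, $-_Hx\in H$ with $\mathrm{conv}(x,-_Hx)=H$ is the antipode of $x$ in $H$; $H$ is antipodal if every vertex has an antipode in $H$. $H$ is gated if for every vertex $x$ of $G$ there is $x'\in H$ such that for every $y\in H$ some shortest $x$–$y$ path passes through $x'$. *)

theory Defs
  imports Main
begin

datatype sign = Pos | Neg | Zero

fun sign_mult :: "sign \<Rightarrow> sign \<Rightarrow> sign" where
  "sign_mult Zero _ = Zero"
| "sign_mult _ Zero = Zero"
| "sign_mult Pos Pos = Pos"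
| "sign_mult Neg Neg = Pos"
| "sign_mult Pos Neg = Neg"
| "sign_mult Neg Pos = Neg"

fun sign_neg :: "sign \<Rightarrow> sign" where
  "sign_neg Pos = Neg" | "sign_neg Neg = Pos" | "sign_neg Zero = Zero"

definition signvectors :: "'e set \<Rightarrow> ('e \<Rightarrow> sign) set" where
  "signvectors E = {X. \<forall>e. e \<notin> E \<longrightarrow> X e = Zero}"

definition sep :: "'e set \<Rightarrow> ('e \<Rightarrow> sign) \<Rightarrow> ('e \<Rightarrow> sign) \<Rightarrow> 'e set" where
  "sep E X Y = {e \<in> E. sign_mult (X e) (Y e) = Neg}"

definition comp :: "('e \<Rightarrow> sign) \<Rightarrow> ('e \<Rightarrow> sign) \<Rightarrow> ('e \<Rightarrow> sign)" where
  "comp X Y = (\<lambda>e. if X e \<noteq> Zero then X e else Y e)"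

definition negv :: "('e \<Rightarrow> sign) \<Rightarrow> ('e \<Rightarrow> sign)" where
  "negv X = (\<lambda>e. sign_neg (X e))"

definition face_symmetry :: "'e set \<Rightarrow> ('e \<Rightarrow> sign) set \<Rightarrow> bool" where
  "face_symmetry E L \<longleftrightarrow> (\<forall>X\<in>L. \<forall>Y\<in>L. comp X (negv Y) \<in> L)"

definition strong_elimination :: "'e set \<Rightarrow> ('e \<Rightarrow> sign) set \<Rightarrow> bool" where
  "strong_elimination E L \<longleftrightarrow>
     (\<forall>X\<in>L. \<forall>Y\<in>L. \<forall>e\<in>sep E X Y. \<exists>Z\<in>L. Z e = Zero \<and>
        (\<forall>f\<in>E - sep E X Y. Z f = comp X Y f))"

definition COM :: "'e set \<Rightarrow> ('e \<Rightarrow> sign) set \<Rightarrow> bool" where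
  "COM E L \<longleftrightarrow> face_symmetry E L \<and> strong_elimination E L"

definition simple_svs :: "'e set \<Rightarrow> ('e \<Rightarrow> sign) set \<Rightarrow> bool" where
  "simple_svs E L \<longleftrightarrow>
     (\<forall>e\<in>E. \<forall>s. \<exists>X\<in>L. X e = s) \<and>
     (\<forall>e\<in>E. \<forall>f\<in>E. e \<noteq> f \<longrightarrow>
        (\<exists>X\<in>L. \<exists>Y\<in>L. {sign_mult (X e) (X f), sign_mult (Y e) (Y f)} = {Pos, Neg}))"

definition topes :: "'e set \<Rightarrow> ('e \<Rightarrow> sign) set \<Rightarrow> ('e \<Rightarrow> sign) set" where
  "topes E L = {X \<in> L. \<forall>e\<in>E. X e \<noteq> Zero}"

text \<open>Tope graph: induced subgraph of the hypercube on the tope set T;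
  two topes are adjacent iff they differ in exactly one coordinate.\<close>
definition tadj :: "('e \<Rightarrow> sign) set \<Rightarrow> ('e \<Rightarrow> sign) \<Rightarrow> ('e \<Rightarrow> sign) \<Rightarrow> bool" where
  "tadj T x y \<longleftrightarrow> x \<in> T \<and> y \<in> T \<and> card {e. x e \<noteq> y e} = 1"

definition walk_betw :: "('e \<Rightarrow> sign) set \<Rightarrow> ('e \<Rightarrow> sign) \<Rightarrow> ('e \<Rightarrow> sign)
    \<Rightarrow> ('e \<Rightarrow> sign) list \<Rightarrow> bool" where
  "walk_betw T x y p \<longleftrightarrow> p \<noteq> [] \<and> set p \<subseteq> T \<and> hd p = x \<and> last p = y \<and>
     (\<forall>i. Suc i < length p \<longrightarrow> tadj T (p ! i) (p ! Suc i))"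

definition shortest_path :: "('e \<Rightarrow> sign) set \<Rightarrow> ('e \<Rightarrow> sign) \<Rightarrow> ('e \<Rightarrow> sign)
    \<Rightarrow> ('e \<Rightarrow> sign) list \<Rightarrow> bool" where
  "shortest_path T x y p \<longleftrightarrow> walk_betw T x y p \<and>
     (\<forall>q. walk_betw T x y q \<longrightarrow> length p \<le> length q)"

text \<open>Convex (hence induced) subgraphs are identified with their vertex sets.\<close>
definition convex_sg :: "('e \<Rightarrow> sign) set \<Rightarrow> ('e \<Rightarrow> sign) set \<Rightarrow> bool" where
  "convex_sg T H \<longleftrightarrow> H \<subseteq> T \<and>
     (\<forall>u\<in>H. \<forall>v\<in>H. \<forall>p. shortest_path T u v p \<longrightarrow> set p \<subseteq> H)"

definition conv_sg :: "('e \<Rightarrow> sign) set \<Rightarrow> ('e \<Rightarrow> sign) set \<Rightarrow> ('e \<Rightarrow> sign) set" where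
  "conv_sg T S = \<Inter>{C. convex_sg T C \<and> S \<subseteq> C}"

definition antipodal_sg :: "('e \<Rightarrow> sign) set \<Rightarrow> ('e \<Rightarrow> sign) set \<Rightarrow> bool" where
  "antipodal_sg T H \<longleftrightarrow> H \<noteq> {} \<and> H \<subseteq> T \<and>
     (\<forall>x\<in>H. \<exists>y\<in>H. conv_sg T {x, y} = H)"

definition gated_sg :: "('e \<Rightarrow> sign) set \<Rightarrow> ('e \<Rightarrow> sign) set \<Rightarrow> bool" where
  "gated_sg T H \<longleftrightarrow> H \<subseteq> T \<and>
     (\<forall>x\<in>T. \<exists>x'\<in>H. \<forall>y\<in>H. \<exists>p. shortest_path T x y p \<and> x' \<in> set p)"

definition Xsg :: "'e set \<Rightarrow> ('e \<Rightarrow> sign) set \<Rightarrow> ('e \<Rightarrow> sign)" where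
  "Xsg E H = (\<lambda>e. if e \<in> E \<and> (\<forall>v\<in>H. v e = Pos) then Pos
               else if e \<in> E \<and> (\<forall>v\<in>H. v e = Neg) then Neg else Zero)"

definition LG :: "'e set \<Rightarrow> ('e \<Rightarrow> sign) set \<Rightarrow> ('e \<Rightarrow> sign) set" where
  "LG E T = {X \<in> signvectors E. \<forall>Y\<in>T. comp X (negv Y) \<in> T}"

end

theory Submission
  imports Defs
begin

text \<open>
  Strong elimination and simplicity give every tope \<open>x\<close>, for any other tope \<open>y\<close>, a neighbour
  in the tope graph that differs from \<open>x\<close> in a single element of \<open>S(x,y)\<close>. Hence the distance of
  two topes is the size of their separator, shortest paths only pass through topes lying
  coordinatewise between their ends, and a set of topes is convex iff it is closed under this
  betweenness. In particular \<open>conv(x,y)\<close> is the set of topes above the sign vector that agrees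
  with \<open>x\<close> and \<open>y\<close> where they agree and is \<open>0\<close> elsewhere. So an antipodal subgraph \<open>H\<close> is the
  set \<open>T\<^sub>X\<close> of topes above \<open>X = X(H)\<close>, and \<open>t \<mapsto> X \<circ> -t\<close> maps \<open>T\<^sub>X\<close> into the topes.

  For \<open>X \<in> L\<close> the set \<open>T\<^sub>X\<close> is antipodal (with antipodes \<open>t\<close> and \<open>X \<circ> -t\<close>), gated (with gate
  \<open>X \<circ> t\<close>) and satisfies \<open>X(T\<^sub>X) = X\<close>. Conversely a sign vector \<open>X\<close> with this reflection property
  lies in \<open>L\<close>: by induction on the number of zeros, \<open>X \<circ> -A \<in> L\<close> for every \<open>A \<in> L\<close> above \<open>X\<close>,
  and strong elimination between \<open>A\<close> and \<open>X \<circ> -A\<close> shrinks the support of \<open>A\<close> down to \<open>X\<close>.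
  The members of \<open>L(G)\<close> have the reflection property for all topes.
\<close>

section \<open>Sign vectors\<close>

lemma sign_neg_neg [simp]: "sign_neg (sign_neg a) = a"
  by (cases a) auto

lemma sign_neg_eq_Zero_iff [simp]: "sign_neg a = Zero \<longleftrightarrow> a = Zero"
  by (cases a) auto

lemma sign_neg_eq_self_iff [simp]: "sign_neg a = a \<longleftrightarrow> a = Zero" "a = sign_neg a \<longleftrightarrow> a = Zero"
  by (cases a; simp)+

lemma nonzero_sign_neq_imp_neg: "a \<noteq> Zero \<Longrightarrow> b \<noteq> Zero \<Longrightarrow> a \<noteq> b \<Longrightarrow> b = sign_neg a"
  by (cases a; cases b) auto

lemma sign_mult_eq_Neg_iff: "sign_mult a b = Neg \<longleftrightarrow> a \<noteq> Zero \<and> b = sign_neg a"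
  by (cases a; cases b) auto

lemma sign_mult_eq_Zero_iff: "sign_mult a b = Zero \<longleftrightarrow> a = Zero \<or> b = Zero"
  by (cases a; cases b) auto

lemma sign_mult_neq_nonzero:
  "sign_mult a b \<noteq> sign_mult c d \<Longrightarrow> a \<noteq> Zero \<Longrightarrow> b \<noteq> Zero \<Longrightarrow> c \<noteq> Zero \<Longrightarrow> d \<noteq> Zero
    \<Longrightarrow> (a = c \<longleftrightarrow> b \<noteq> d)"
  by (cases a; cases b; cases c; cases d) auto

lemma doubleton_eq_Pos_Neg: "{a, b} = {Pos, Neg} \<Longrightarrow> a \<noteq> Zero \<and> b \<noteq> Zero \<and> a \<noteq> b"
  by (cases a; cases b) (auto simp: doubleton_eq_iff)

lemma sv_comp_assoc: "comp (comp X Y) Z = comp X (comp Y Z)"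
  by (simp add: comp_def fun_eq_iff)

lemma sv_comp_absorb: "comp X (comp Y (comp X Z)) = comp X (comp Y Z)"
  by (simp add: comp_def fun_eq_iff)

lemma negv_negv [simp]: "negv (negv X) = X"
  by (simp add: negv_def fun_eq_iff)

lemma negv_comp: "negv (comp X Y) = comp (negv X) (negv Y)"
  by (simp add: negv_def comp_def fun_eq_iff)

definition sv_le :: "('e \<Rightarrow> sign) \<Rightarrow> ('e \<Rightarrow> sign) \<Rightarrow> bool" (infix "\<preceq>" 50) where
  "X \<preceq> Y \<longleftrightarrow> (\<forall>e. X e \<noteq> Zero \<longrightarrow> Y e = X e)"

lemma sv_le_trans: "X \<preceq> Y \<Longrightarrow> Y \<preceq> Z \<Longrightarrow> X \<preceq> Z"
  by (simp add: sv_le_def)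

lemma sv_le_comp: "X \<preceq> comp X Y"
  by (simp add: sv_le_def comp_def)

lemma sv_le_comp_right: "X \<preceq> Y \<Longrightarrow> X \<preceq> comp Y Z"
  by (simp add: sv_le_def comp_def)

definition face_topes :: "('e \<Rightarrow> sign) set \<Rightarrow> ('e \<Rightarrow> sign) \<Rightarrow> ('e \<Rightarrow> sign) set" where
  "face_topes T X = {t \<in> T. X \<preceq> t}"

definition sv_meet :: "('e \<Rightarrow> sign) \<Rightarrow> ('e \<Rightarrow> sign) \<Rightarrow> ('e \<Rightarrow> sign)" where
  "sv_meet x y = (\<lambda>e. if x e = y e then x e else Zero)"

lemma Xsg_signvectors: "Xsg E H \<in> signvectors E"
  by (simp add: signvectors_def Xsg_def)

text \<open>The condition defining \<open>L(G)\<close>, required only for the topes above \<open>X\<close>: this is what an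
  antipodal subgraph provides.\<close>
definition tope_symmetric :: "('e \<Rightarrow> sign) set \<Rightarrow> ('e \<Rightarrow> sign) \<Rightarrow> bool" where
  "tope_symmetric T X \<longleftrightarrow> face_topes T X \<noteq> {} \<and> (\<forall>t\<in>face_topes T X. comp X (negv t) \<in> T)"

section \<open>Separators and walks\<close>

definition diff_set :: "('e \<Rightarrow> 'a) \<Rightarrow> ('e \<Rightarrow> 'a) \<Rightarrow> 'e set" where
  "diff_set x y = {e. x e \<noteq> y e}"

definition between :: "('e \<Rightarrow> 'a) \<Rightarrow> ('e \<Rightarrow> 'a) \<Rightarrow> ('e \<Rightarrow> 'a) \<Rightarrow> bool" where
  "between x y z \<longleftrightarrow> (\<forall>e. z e = x e \<or> z e = y e)"

lemma diff_set_subset_Un: "diff_set x y \<subseteq> diff_set x z \<union> diff_set z y"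
  by (auto simp: diff_set_def)

lemma between_iff_disjoint: "between x y z \<longleftrightarrow> diff_set x z \<inter> diff_set z y = {}"
  by (simp add: between_def diff_set_def disjoint_iff eq_commute[of "x _" "z _"] imp_conv_disj)

lemma diff_set_eq_Un_if_between:
  assumes "between x y z"
  shows "diff_set x y = diff_set x z \<union> diff_set z y"
proof (intro equalityI subsetI)
  fix e
  assume "e \<in> diff_set x z \<union> diff_set z y"
  moreover have "z e = x e \<or> z e = y e"
    using assms by (simp add: between_def)
  ultimately show "e \<in> diff_set x y"
    by (auto simp: diff_set_def)
qed (auto simp: diff_set_def)

lemma card_diff_set_triangle:
  assumes "finite (diff_set x z)" "finite (diff_set z y)"
  shows "card (diff_set x y) \<le> card (diff_set x z) + card (diff_set z y)"
  using card_mono[OF _ diff_set_subset_Un] card_Un_le assms by (meson finite_UnI le_trans)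

lemma between_iff_card:
  assumes fin: "finite (diff_set x z)" "finite (diff_set z y)"
  shows "between x y z \<longleftrightarrow> card (diff_set x z) + card (diff_set z y) = card (diff_set x y)"
proof
  assume "between x y z"
  then show "card (diff_set x z) + card (diff_set z y) = card (diff_set x y)"
    using card_Un_disjoint[OF fin] diff_set_eq_Un_if_between[of x y z]
    by (simp add: between_iff_disjoint)
next
  assume eq: "card (diff_set x z) + card (diff_set z y) = card (diff_set x y)"
  have "card (diff_set x y) \<le> card (diff_set x z \<union> diff_set z y)"
    using fin by (intro card_mono diff_set_subset_Un) simp
  then have "card (diff_set x z \<inter> diff_set z y) = 0"
    using card_Un_Int[OF fin] eq by linarith
  then show "between x y z"
    using fin by (simp add: between_iff_disjoint)
qed

lemma between_refl: "between x y x" "between x y y"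
  by (simp_all add: between_def)

lemma between_between:
  assumes "between x y u" "between x y v" "between u v z"
  shows "between x y z"
  unfolding between_def
proof
  fix e
  have "z e = u e \<or> z e = v e" "u e = x e \<or> u e = y e" "v e = x e \<or> v e = y e"
    using assms by (simp_all add: between_def)
  then show "z e = x e \<or> z e = y e" by auto
qed

lemma all_Suc_less_Cons:
  assumes "l \<noteq> []"
  shows "(\<forall>i. Suc i < length (a # l) \<longrightarrow> P ((a # l) ! i) ((a # l) ! Suc i))
    \<longleftrightarrow> P a (hd l) \<and> (\<forall>i. Suc i < length l \<longrightarrow> P (l ! i) (l ! Suc i))"
  using assms by (auto simp: hd_conv_nth nth_Cons split: nat.split)

lemma walk_betw_Cons:
  assumes "l \<noteq> []"
  shows "walk_betw T x y (a # l) \<longleftrightarrow> x = a \<and> tadj T a (hd l) \<and> walk_betw T (hd l) y l"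
  unfolding walk_betw_def all_Suc_less_Cons[OF assms] using assms by (auto simp: tadj_def)

lemma walk_betw_diff_set:
  "walk_betw T x y p \<Longrightarrow> finite (diff_set x y) \<and> card (diff_set x y) < length p"
proof (induction p arbitrary: x)
  case Nil
  then show ?case by (simp add: walk_betw_def)
next
  case (Cons a l)
  show ?case
  proof (cases "l = []")
    case True
    then show ?thesis using Cons.prems by (auto simp: walk_betw_def diff_set_def)
  next
    case False
    with Cons.prems have "x = a" "tadj T a (hd l)" and walk: "walk_betw T (hd l) y l"
      by (auto simp: walk_betw_Cons)
    then have step: "card (diff_set x (hd l)) = 1"
      by (simp add: tadj_def diff_set_def)
    then have "finite (diff_set x (hd l))"
      by (simp add: card_ge_0_finite)
    with Cons.IH[OF walk] step show ?thesis
      using card_diff_set_triangle[of x "hd l" y] finite_subset[OF diff_set_subset_Un] by auto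
  qed
qed

lemma walk_betw_split:
  "walk_betw T x y (p @ z # q) \<Longrightarrow> walk_betw T x z (p @ [z]) \<and> walk_betw T z y (z # q)"
proof (induction p arbitrary: x)
  case Nil
  then show ?case by (auto simp: walk_betw_def)
next
  case (Cons a p)
  have "p @ z # q \<noteq> []" "hd (p @ [z]) = hd (p @ z # q)"
    by (cases p; simp)+
  with Cons show ?case
    using walk_betw_Cons[of "p @ z # q" T x y a] walk_betw_Cons[of "p @ [z]" T x z a] by auto
qed

lemma walk_betw_append:
  "walk_betw T x z p \<Longrightarrow> walk_betw T z y q \<Longrightarrow> walk_betw T x y (p @ tl q)"
proof (induction p arbitrary: x)
  case Nil
  then show ?case by (simp add: walk_betw_def)
next
  case (Cons a l)
  show ?case
  proof (cases "l = []")
    case True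
    with Cons.prems show ?thesis by (cases q) (auto simp: walk_betw_def)
  next
    case False
    with Cons show ?thesis
      using walk_betw_Cons[of l T x z a] walk_betw_Cons[of "l @ tl q" T x y a] by auto
  qed
qed

section \<open>The tope graph of a simple COM\<close>

locale simple_com =
  fixes E :: "'e set" and L :: "('e \<Rightarrow> sign) set"
  assumes finite_E: "finite E" and L_nonempty: "L \<noteq> {}" and L_signvectors: "L \<subseteq> signvectors E"
    and com: "COM E L" and simple: "simple_svs E L"
begin

abbreviation T where "T \<equiv> topes E L"

lemma zero_outside: "X \<in> L \<Longrightarrow> e \<notin> E \<Longrightarrow> X e = Zero"
  using L_signvectors by (auto simp: signvectors_def)

lemma tope_in_L: "t \<in> T \<Longrightarrow> t \<in> L"
  by (simp add: topes_def)

lemma tope_nonzero: "t \<in> T \<Longrightarrow> e \<in> E \<Longrightarrow> t e \<noteq> Zero"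
  by (simp add: topes_def)

lemma comp_negv_mem: "X \<in> L \<Longrightarrow> Y \<in> L \<Longrightarrow> comp X (negv Y) \<in> L"
  using com by (simp add: COM_def face_symmetry_def)

lemma strong_elim:
  "X \<in> L \<Longrightarrow> Y \<in> L \<Longrightarrow> e \<in> sep E X Y
    \<Longrightarrow> \<exists>Z\<in>L. Z e = Zero \<and> (\<forall>f\<in>E - sep E X Y. Z f = comp X Y f)"
  using com by (simp add: COM_def strong_elimination_def)

lemma comp_mem:
  assumes "X \<in> L" "Y \<in> L"
  shows "comp X Y \<in> L"
proof -
  have "comp X Y = comp X (negv (comp X (negv Y)))"
    by (auto simp: comp_def negv_def fun_eq_iff)
  then show ?thesis
    using comp_negv_mem[OF assms(1) comp_negv_mem[OF assms]] by simp
qed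

lemma comp_tope: "X \<in> L \<Longrightarrow> t \<in> T \<Longrightarrow> comp X t \<in> T"
  using comp_mem[of X t] by (auto simp: topes_def comp_def)

lemma comp_negv_tope: "X \<in> L \<Longrightarrow> t \<in> T \<Longrightarrow> comp X (negv t) \<in> T"
  using comp_negv_mem[of X t] by (auto simp: topes_def comp_def negv_def)

lemma topes_neq_imp_neg:
  assumes "x \<in> T" "y \<in> T" "x e \<noteq> y e"
  shows "e \<in> E \<and> y e = sign_neg (x e)"
proof -
  have "e \<in> E"
    using assms zero_outside tope_in_L by metis
  then show ?thesis
    using assms nonzero_sign_neq_imp_neg tope_nonzero by blast
qed

lemma diff_set_topes_subset: "x \<in> T \<Longrightarrow> y \<in> T \<Longrightarrow> diff_set x y \<subseteq> E"
  using topes_neq_imp_neg by (auto simp: diff_set_def)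

lemma finite_diff_set_topes: "x \<in> T \<Longrightarrow> y \<in> T \<Longrightarrow> finite (diff_set x y)"
  using diff_set_topes_subset finite_E by (rule finite_subset)

lemma sep_tope: "x \<in> T \<Longrightarrow> sep E V x = {e \<in> E. V e \<noteq> Zero \<and> V e \<noteq> x e}"
  using tope_nonzero nonzero_sign_neq_imp_neg
  by (fastforce simp: sep_def sign_mult_eq_Neg_iff)

lemma diff_set_comp_tope: "V \<in> L \<Longrightarrow> x \<in> T \<Longrightarrow> diff_set x (comp V x) = sep E V x"
  using zero_outside by (auto simp: sep_tope diff_set_def comp_def)

lemma ex_nonzero_on:
  assumes "F \<subseteq> E"
  shows "\<exists>X\<in>L. \<forall>e\<in>F. X e \<noteq> Zero"
  using finite_subset[OF assms finite_E] assms
proof (induction F rule: finite_induct)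
  case empty
  then show ?case using L_nonempty by blast
next
  case (insert e F)
  then obtain X where X: "X \<in> L" "\<forall>f\<in>F. X f \<noteq> Zero" by blast
  have "e \<in> E" using insert.prems by simp
  then obtain W where "W \<in> L" "W e = Pos"
    using simple unfolding simple_svs_def by blast
  with X show ?case
    by (intro bexI[of _ "comp X W"] comp_mem) (auto simp: comp_def)
qed

lemma topes_nonempty: "T \<noteq> {}"
  using ex_nonzero_on[OF order_refl] by (auto simp: topes_def)

lemma tope_elimination:
  assumes "x \<in> T" "y \<in> T" "x e \<noteq> y e"
  obtains Z where "Z \<in> L" "Z e = Zero" "\<And>g. x g = y g \<Longrightarrow> Z g = x g"
proof -
  have "e \<in> E"
    using assms topes_neq_imp_neg by blast
  then have "e \<in> sep E x y"
    using assms tope_nonzero by (simp add: sep_tope)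
  then obtain Z where "Z \<in> L" "Z e = Zero" and Z: "\<forall>f\<in>E - sep E x y. Z f = comp x y f"
    using strong_elim assms tope_in_L by blast
  moreover have "Z g = x g" if "x g = y g" for g
    using Z that zero_outside[OF \<open>Z \<in> L\<close>] zero_outside[OF tope_in_L[OF assms(1)]]
    by (cases "g \<in> E") (auto simp: sep_tope[OF assms(2)] comp_def)
  ultimately show ?thesis using that by blast
qed

lemma ex_separating_pair:
  assumes "e \<in> E" "f \<in> E" "e \<noteq> f" "x \<in> T"
  obtains W where "W \<in> L" "W e \<noteq> Zero" "W f \<noteq> Zero" "W e = x e \<longleftrightarrow> W f \<noteq> x f"
proof -
  obtain W1 W2 where W: "W1 \<in> L" "W2 \<in> L"
    and pn: "{sign_mult (W1 e) (W1 f), sign_mult (W2 e) (W2 f)} = {Pos, Neg}"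
    using simple assms(1-3) unfolding simple_svs_def by blast
  then obtain W where "W \<in> L" and W_prod: "sign_mult (W e) (W f) \<noteq> sign_mult (x e) (x f)"
    "sign_mult (W e) (W f) \<noteq> Zero"
    using doubleton_eq_Pos_Neg[OF pn] by metis
  moreover have "W e \<noteq> Zero" "W f \<noteq> Zero"
    using W_prod(2) by (auto simp: sign_mult_eq_Zero_iff)
  ultimately show ?thesis
    using that sign_mult_neq_nonzero tope_nonzero assms by metis
qed

lemma ex_closer_tope_if_sep:
  assumes V: "V \<in> L" and x: "x \<in> T" and "sep E V x \<noteq> {}" "sep E V x \<subset> D"
  shows "\<exists>z\<in>T. z \<noteq> x \<and> diff_set x z \<subset> D"
proof (intro bexI conjI)
  show "diff_set x (comp V x) \<subset> D" "comp V x \<in> T"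
    using assms diff_set_comp_tope[OF V x] comp_tope[OF V x] by simp_all
  show "comp V x \<noteq> x"
    using assms(3) diff_set_comp_tope[OF V x] by (auto simp: diff_set_def)
qed

lemma ex_closer_tope:
  assumes x: "x \<in> T" and y: "y \<in> T"
    and ef: "e \<in> diff_set x y" "f \<in> diff_set x y" "e \<noteq> f"
  shows "\<exists>z\<in>T. z \<noteq> x \<and> diff_set x z \<subset> diff_set x y"
proof -
  let ?D = "diff_set x y"
  have DE: "?D \<subseteq> E"
    using diff_set_topes_subset[OF x y] .
  txt \<open>\<open>Z\<close> agrees with \<open>x\<close> off \<open>S(x,y)\<close>; the required tope is \<open>V \<circ> x\<close> for one of
    \<open>V = Z\<close>, \<open>V = Z \<circ> y\<close> or \<open>V = Z \<circ> W\<close> with \<open>W\<close> separating \<open>e\<close> from \<open>f\<close>.\<close>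
  obtain Z where Z: "Z \<in> L" "Z e = Zero" "\<And>g. x g = y g \<Longrightarrow> Z g = x g"
    using tope_elimination[OF x y] ef(1) unfolding diff_set_def by blast
  have x_nonzero: "x g \<noteq> Zero" if "g \<in> ?D" for g
    using that DE tope_nonzero[OF x] by blast
  consider (Z_sep) "sep E Z x \<noteq> {}" | (Z_agrees) g where "g \<in> ?D" "Z g = x g"
    | (Z_vanishes) "\<forall>g\<in>?D. Z g = Zero"
    using DE by (auto simp: sep_tope[OF x])
  then show ?thesis
  proof cases
    case Z_sep
    have "sep E Z x \<subseteq> ?D - {e}"
      using Z by (auto simp: sep_tope[OF x] diff_set_def)
    with Z_sep show ?thesis
      using ex_closer_tope_if_sep[where D = "diff_set x y", OF Z(1) x] ef(1) by blast
  next
    case Z_agrees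
    let ?V = "comp Z y"
    have "sep E ?V x \<subseteq> ?D"
      using Z(3) by (auto simp: sep_tope[OF x] diff_set_def comp_def)
    moreover have "e \<in> sep E ?V x" "g \<notin> sep E ?V x"
      using Z(2) Z_agrees ef(1) DE x_nonzero tope_nonzero[OF y] by (auto simp: sep_tope[OF x] diff_set_def comp_def)
    ultimately show ?thesis
      using ex_closer_tope_if_sep[where D = "diff_set x y", OF comp_mem[OF Z(1) tope_in_L[OF y]] x] Z_agrees(1) by blast
  next
    case Z_vanishes
    obtain W where W: "W \<in> L" "W e \<noteq> Zero" "W f \<noteq> Zero" "W e = x e \<longleftrightarrow> W f \<noteq> x f"
      using ex_separating_pair[of e f x] ef DE x by blast
    let ?V = "comp Z W"
    have "sep E ?V x \<subseteq> ?D"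
      using Z(3) tope_nonzero[OF x] by (auto simp: sep_tope[OF x] diff_set_def comp_def)
    moreover have "e \<in> sep E ?V x \<longleftrightarrow> f \<notin> sep E ?V x"
      using Z_vanishes ef W DE by (auto simp: sep_tope[OF x] comp_def)
    ultimately show ?thesis
      using ex_closer_tope_if_sep[where D = "diff_set x y", OF comp_mem[OF Z(1) W(1)] x] ef by blast
  qed
qed

lemma ex_neighbour_towards:
  assumes "x \<in> T" "y \<in> T" "x \<noteq> y"
  shows "\<exists>z\<in>T. \<exists>g. diff_set x z = {g} \<and> x g \<noteq> y g"
  using assms
proof (induction "card (diff_set x y)" arbitrary: y rule: less_induct)
  case less
  obtain e where e: "e \<in> diff_set x y"
    using less.prems(3) by (auto simp: diff_set_def)
  show ?case
  proof (cases "diff_set x y = {e}")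
    case True
    then show ?thesis
      using less.prems(2) by (auto simp: diff_set_def)
  next
    case False
    then obtain f where "f \<in> diff_set x y" "f \<noteq> e"
      using e by blast
    then obtain z where z: "z \<in> T" "z \<noteq> x" "diff_set x z \<subset> diff_set x y"
      using ex_closer_tope[OF less.prems(1,2) e] by blast
    have "card (diff_set x z) < card (diff_set x y)"
      using psubset_card_mono[OF finite_diff_set_topes[OF less.prems(1,2)] z(3)] .
    then obtain w g where "w \<in> T" "diff_set x w = {g}" "x g \<noteq> z g"
      using less.hyps[OF _ less.prems(1) z(1)] z(2) by metis
    moreover have "x g \<noteq> y g"
      using \<open>x g \<noteq> z g\<close> z(3) by (auto simp: diff_set_def)
    ultimately show ?thesis by blast
  qed
qed

lemma diff_set_neighbour:
  assumes "x \<in> T" "y \<in> T" "z \<in> T" "diff_set x z = {g}" "x g \<noteq> y g"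
  shows "diff_set z y = diff_set x y - {g}"
proof -
  have neighbour: "x f \<noteq> z f \<longleftrightarrow> f = g" for f
    using assms(4) by (simp add: diff_set_def set_eq_iff)
  then have "z g = y g"
    using topes_neq_imp_neg[OF assms(1,3)] topes_neq_imp_neg[OF assms(1,2) assms(5)] by simp
  show ?thesis
  proof (rule set_eqI)
    fix f
    show "f \<in> diff_set z y \<longleftrightarrow> f \<in> diff_set x y - {g}"
      using neighbour[of f] \<open>z g = y g\<close> assms(5) by (cases "f = g") (auto simp: diff_set_def)
  qed
qed

lemma ex_walk_betw:
  assumes "x \<in> T" "y \<in> T"
  shows "\<exists>p. walk_betw T x y p \<and> length p = Suc (card (diff_set x y))"
  using assms
proof (induction "card (diff_set x y)" arbitrary: x rule: less_induct)
  case less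
  show ?case
  proof (cases "x = y")
    case True
    then show ?thesis
      using less.prems by (intro exI[of _ "[x]"]) (simp add: walk_betw_def diff_set_def)
  next
    case False
    then obtain z g where z: "z \<in> T" "diff_set x z = {g}" "x g \<noteq> y g"
      using ex_neighbour_towards less.prems by blast
    have diff: "diff_set z y = diff_set x y - {g}"
      using diff_set_neighbour[OF less.prems z] .
    have g: "g \<in> diff_set x y"
      using z(3) by (simp add: diff_set_def)
    then have "card (diff_set z y) < card (diff_set x y)"
      unfolding diff by (rule card_Diff1_less[OF finite_diff_set_topes[OF less.prems]])
    then obtain p where p: "walk_betw T z y p" "length p = Suc (card (diff_set z y))"
      using less.hyps z(1) less.prems(2) by blast
    have "tadj T x z"
      using less.prems(1) z by (simp add: tadj_def diff_set_def)
    moreover have "p \<noteq> []" "hd p = z"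
      using p(1) by (auto simp: walk_betw_def)
    ultimately have "walk_betw T x y (x # p)"
      using p(1) walk_betw_Cons by metis
    moreover have "length (x # p) = Suc (card (diff_set x y))"
      using p(2) diff g finite_diff_set_topes[OF less.prems]
      by (simp add: card_Diff_singleton) (metis card_gt_0_iff empty_iff Suc_pred)
    ultimately show ?thesis by blast
  qed
qed

section \<open>Shortest paths and convexity\<close>

lemma shortest_path_iff:
  assumes "x \<in> T" "y \<in> T"
  shows "shortest_path T x y p \<longleftrightarrow> walk_betw T x y p \<and> length p = Suc (card (diff_set x y))"
proof
  assume sp: "shortest_path T x y p"
  obtain q where "walk_betw T x y q" "length q = Suc (card (diff_set x y))"
    using ex_walk_betw[OF assms] by blast
  with sp have "length p \<le> Suc (card (diff_set x y))"
    unfolding shortest_path_def by metis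
  moreover have "card (diff_set x y) < length p"
    using sp walk_betw_diff_set unfolding shortest_path_def by blast
  ultimately show "walk_betw T x y p \<and> length p = Suc (card (diff_set x y))"
    using sp by (simp add: shortest_path_def)
next
  assume "walk_betw T x y p \<and> length p = Suc (card (diff_set x y))"
  then show "shortest_path T x y p"
    using walk_betw_diff_set[of T x y] by (auto simp: shortest_path_def Suc_le_eq)
qed

lemma shortest_path_between:
  assumes sp: "shortest_path T x y p" and z: "z \<in> set p"
  shows "z \<in> T \<and> between x y z"
proof -
  have walk: "walk_betw T x y p"
    using sp by (simp add: shortest_path_def)
  then have x: "x \<in> T" and y: "y \<in> T" and "z \<in> T"
    using z by (auto simp: walk_betw_def)
  obtain p1 p2 where p: "p = p1 @ z # p2"
    using z by (meson split_list)
  then have "walk_betw T x z (p1 @ [z])" "walk_betw T z y (z # p2)"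
    using walk_betw_split walk by blast+
  then have "card (diff_set x z) < length (p1 @ [z])" "card (diff_set z y) < length (z # p2)"
    using walk_betw_diff_set by blast+
  moreover have "length p = Suc (card (diff_set x y))"
    using sp shortest_path_iff[OF x y] by blast
  ultimately have "card (diff_set x z) + card (diff_set z y) \<le> card (diff_set x y)"
    using p by simp
  moreover have fin: "finite (diff_set x z)" "finite (diff_set z y)"
    using finite_diff_set_topes x y \<open>z \<in> T\<close> by blast+
  ultimately have "between x y z"
    using between_iff_card[OF fin] card_diff_set_triangle[OF fin] by linarith
  with \<open>z \<in> T\<close> show ?thesis by blast
qed

lemma ex_shortest_path_through:
  assumes x: "x \<in> T" and y: "y \<in> T" and z: "z \<in> T" and "between x y z"
  shows "\<exists>p. shortest_path T x y p \<and> z \<in> set p"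
proof -
  obtain p where p: "walk_betw T x z p" "length p = Suc (card (diff_set x z))"
    using ex_walk_betw[OF x z] by blast
  obtain q where q: "walk_betw T z y q" "length q = Suc (card (diff_set z y))"
    using ex_walk_betw[OF z y] by blast
  have "card (diff_set x z) + card (diff_set z y) = card (diff_set x y)"
    using between_iff_card finite_diff_set_topes x y z assms(4) by blast
  then have "shortest_path T x y (p @ tl q)"
    using walk_betw_append[OF p(1) q(1)] p(2) q(2) shortest_path_iff[OF x y] by simp
  moreover have "z \<in> set (p @ tl q)"
    using p(1) by (auto simp: walk_betw_def)
  ultimately show ?thesis by blast
qed

lemma convex_sg_iff:
  "convex_sg T C \<longleftrightarrow> C \<subseteq> T \<and> (\<forall>u\<in>C. \<forall>v\<in>C. \<forall>z\<in>T. between u v z \<longrightarrow> z \<in> C)"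
  unfolding convex_sg_def
  using shortest_path_between ex_shortest_path_through by (meson subsetD subsetI)

lemma conv_sg_pair:
  assumes "x \<in> T" "y \<in> T"
  shows "conv_sg T {x, y} = {z \<in> T. between x y z}"
proof
  have "convex_sg T {z \<in> T. between x y z}"
    unfolding convex_sg_iff using between_between by blast
  then show "conv_sg T {x, y} \<subseteq> {z \<in> T. between x y z}"
    unfolding conv_sg_def using assms between_refl by (intro Inter_lower) auto
next
  show "{z \<in> T. between x y z} \<subseteq> conv_sg T {x, y}"
    unfolding conv_sg_def convex_sg_iff by blast
qed

section \<open>Faces and antipodal subgraphs\<close>

lemma sv_meet_le_iff_between:
  assumes x: "x \<in> T" and y: "y \<in> T" and z: "z \<in> T"
  shows "sv_meet x y \<preceq> z \<longleftrightarrow> between x y z"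
proof -
  have "(sv_meet x y e \<noteq> Zero \<longrightarrow> z e = sv_meet x y e) \<longleftrightarrow> z e = x e \<or> z e = y e" for e
  proof (cases "e \<in> E")
    case False
    then show ?thesis
      using zero_outside[OF tope_in_L[OF x] False] zero_outside[OF tope_in_L[OF y] False]
        zero_outside[OF tope_in_L[OF z] False]
      by (simp add: sv_meet_def)
  next
    case True
    then have "x e \<noteq> Zero" "z e \<noteq> Zero" "x e \<noteq> y e \<Longrightarrow> y e = sign_neg (x e)"
      using tope_nonzero x z topes_neq_imp_neg[OF x y] by blast+
    then show ?thesis
      by (cases "x e"; cases "z e") (auto simp: sv_meet_def)
  qed
  then show ?thesis
    by (simp add: sv_le_def between_def)
qed

lemma face_topes_sv_meet:
  "x \<in> T \<Longrightarrow> y \<in> T \<Longrightarrow> face_topes T (sv_meet x y) = {z \<in> T. between x y z}"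
  using sv_meet_le_iff_between by (auto simp: face_topes_def)

lemma Xsg_eq_sv_meet:
  assumes H: "H \<subseteq> T" "x \<in> H" "y \<in> H" "\<forall>z\<in>H. between x y z"
  shows "Xsg E H = sv_meet x y"
proof
  fix e
  have x: "x \<in> T" and y: "y \<in> T"
    using H by auto
  show "Xsg E H e = sv_meet x y e"
  proof (cases "e \<in> E")
    case False
    then show ?thesis
      using zero_outside[OF tope_in_L[OF x] False] by (simp add: Xsg_def sv_meet_def)
  next
    case True
    then have nonzero: "x e \<noteq> Zero" "y e \<noteq> Zero"
      using tope_nonzero x y by blast+
    show ?thesis
    proof (cases "x e = y e")
      case True
      then have "\<forall>z\<in>H. z e = x e"
        using H(4) unfolding between_def by metis
      then have "Xsg E H e = x e"
        using \<open>e \<in> E\<close> nonzero H(2) by (cases "x e") (auto simp: Xsg_def)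
      with True show ?thesis
        by (simp add: sv_meet_def)
    next
      case False
      then have "\<not> (\<forall>z\<in>H. z e = Pos)" "\<not> (\<forall>z\<in>H. z e = Neg)"
        using H(2,3) by metis+
      then show ?thesis
        using False by (simp add: Xsg_def sv_meet_def)
    qed
  qed
qed

lemma sv_meet_comp_negv:
  assumes X: "X \<in> L" and t: "t \<in> face_topes T X"
  shows "sv_meet t (comp X (negv t)) = X"
proof
  fix e
  have "t \<in> T" "X \<preceq> t"
    using t by (auto simp: face_topes_def)
  then show "sv_meet t (comp X (negv t)) e = X e"
    using zero_outside[OF X] zero_outside[OF tope_in_L] tope_nonzero
    by (cases "e \<in> E"; cases "X e = Zero")
       (auto simp: sv_meet_def comp_def negv_def sv_le_def)
qed

lemma comp_sv_meet_negv:
  assumes u: "u \<in> T" and v: "v \<in> T"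
  shows "comp (sv_meet u v) (negv u) = v"
proof
  fix e
  show "comp (sv_meet u v) (negv u) e = v e"
  proof (cases "u e = v e")
    case True
    then show ?thesis
      using zero_outside[OF tope_in_L[OF v]] tope_nonzero[OF u]
      by (cases "e \<in> E") (auto simp: sv_meet_def comp_def negv_def)
  next
    case False
    then show ?thesis
      using topes_neq_imp_neg[OF u v] by (simp add: sv_meet_def comp_def negv_def)
  qed
qed

lemma face_topes_eq_conv_sg:
  assumes X: "X \<in> L" and t: "t \<in> face_topes T X"
  shows "comp X (negv t) \<in> face_topes T X"
    and "conv_sg T {t, comp X (negv t)} = face_topes T X"
proof -
  have "t \<in> T"
    using t by (simp add: face_topes_def)
  then show "comp X (negv t) \<in> face_topes T X"
    using comp_negv_tope[OF X] sv_le_comp by (simp add: face_topes_def)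
  then have "comp X (negv t) \<in> T"
    by (simp add: face_topes_def)
  with \<open>t \<in> T\<close> show "conv_sg T {t, comp X (negv t)} = face_topes T X"
    using conv_sg_pair face_topes_sv_meet sv_meet_comp_negv[OF X t] by metis
qed

lemma face_topes_nonempty: "X \<in> L \<Longrightarrow> face_topes T X \<noteq> {}"
  using topes_nonempty comp_tope sv_le_comp by (fastforce simp: face_topes_def)

lemma antipodal_face_topes: "X \<in> L \<Longrightarrow> antipodal_sg T (face_topes T X)"
  unfolding antipodal_sg_def using face_topes_nonempty face_topes_eq_conv_sg
  by (auto simp: face_topes_def) blast

lemma Xsg_face_topes:
  assumes X: "X \<in> L"
  shows "Xsg E (face_topes T X) = X"
proof -
  obtain t where t: "t \<in> face_topes T X"
    using face_topes_nonempty[OF X] by blast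
  let ?t' = "comp X (negv t)"
  have "t \<in> T" "?t' \<in> T" "?t' \<in> face_topes T X"
    using t face_topes_eq_conv_sg(1)[OF X t] by (auto simp: face_topes_def)
  moreover have "face_topes T X = {z \<in> T. between t ?t' z}"
    using face_topes_eq_conv_sg(2)[OF X t] conv_sg_pair \<open>t \<in> T\<close> \<open>?t' \<in> T\<close> by simp
  ultimately have "Xsg E (face_topes T X) = sv_meet t ?t'"
    using t by (intro Xsg_eq_sv_meet) auto
  then show ?thesis
    using sv_meet_comp_negv[OF X t] by simp
qed

lemma gated_face_topes:
  assumes X: "X \<in> L"
  shows "gated_sg T (face_topes T X)"
  unfolding gated_sg_def
proof (intro conjI ballI)
  show "face_topes T X \<subseteq> T"
    by (auto simp: face_topes_def)
next
  fix x
  assume x: "x \<in> T"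
  have "between x y (comp X x)" if "X \<preceq> y" for y
    using that by (auto simp: between_def comp_def sv_le_def)
  then have "\<forall>y\<in>face_topes T X. \<exists>p. shortest_path T x y p \<and> comp X x \<in> set p"
    using ex_shortest_path_through x comp_tope[OF X x] by (auto simp: face_topes_def)
  moreover have "comp X x \<in> face_topes T X"
    using comp_tope[OF X x] sv_le_comp by (simp add: face_topes_def)
  ultimately show "\<exists>x'\<in>face_topes T X. \<forall>y\<in>face_topes T X. \<exists>p. shortest_path T x y p \<and> x' \<in> set p"
    by blast
qed

lemma antipodal_sg_face_topes:
  assumes H: "antipodal_sg T H"
  shows "H = face_topes T (Xsg E H)" and "tope_symmetric T (Xsg E H)"
proof -
  have HT: "H \<subseteq> T" and "H \<noteq> {}" and antipode: "\<forall>x\<in>H. \<exists>y\<in>H. conv_sg T {x, y} = H"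
    using H by (auto simp: antipodal_sg_def)
  have H_meet: "H = face_topes T (sv_meet u v) \<and> Xsg E H = sv_meet u v"
    if "u \<in> H" "v \<in> H" "conv_sg T {u, v} = H" for u v
  proof -
    have "u \<in> T" "v \<in> T"
      using that HT by auto
    then have "H = {z \<in> T. between u v z}" "H = face_topes T (sv_meet u v)"
      using that(3) conv_sg_pair face_topes_sv_meet by simp_all
    then show ?thesis
      using Xsg_eq_sv_meet[OF HT that(1,2)] by blast
  qed
  obtain x where "x \<in> H"
    using \<open>H \<noteq> {}\<close> by blast
  then show H_face: "H = face_topes T (Xsg E H)"
    using antipode H_meet by metis
  show "tope_symmetric T (Xsg E H)"
    unfolding tope_symmetric_def
  proof (intro conjI ballI)
    show "face_topes T (Xsg E H) \<noteq> {}"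
      using H_face \<open>H \<noteq> {}\<close> by simp
  next
    fix u
    assume "u \<in> face_topes T (Xsg E H)"
    then have u: "u \<in> H"
      using H_face by simp
    then obtain v where v: "v \<in> H" "conv_sg T {u, v} = H"
      using antipode by blast
    have "u \<in> T" "v \<in> T"
      using HT u v(1) by auto
    then have "comp (Xsg E H) (negv u) = v"
      using conjunct2[OF H_meet[OF u v]] comp_sv_meet_negv by simp
    then show "comp (Xsg E H) (negv u) \<in> T"
      using v HT by auto
  qed
qed

section \<open>Recognising covectors\<close>

lemma tope_symmetric_comp_negv:
  assumes A: "A \<in> L" "B \<preceq> A" and B: "tope_symmetric T B"
  shows "tope_symmetric T (comp B (negv A))"
  unfolding tope_symmetric_def
proof (intro conjI ballI)
  let ?B' = "comp B (negv A)"
  have reflect: "comp B (negv (comp A t)) = comp ?B' (negv t)" for t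
    by (simp add: negv_comp sv_comp_assoc)
  obtain t0 where t0: "t0 \<in> T" "B \<preceq> t0"
    using B by (auto simp: tope_symmetric_def face_topes_def)
  then have "comp A t0 \<in> face_topes T B"
    using comp_tope[OF A(1)] sv_le_comp_right[OF A(2)] by (simp add: face_topes_def)
  then have "comp B (negv (comp A t0)) \<in> T"
    using B by (simp add: tope_symmetric_def)
  then have "comp ?B' (negv t0) \<in> T"
    by (simp add: reflect)
  then show "face_topes T ?B' \<noteq> {}"
    using sv_le_comp by (auto simp: face_topes_def)
next
  let ?B' = "comp B (negv A)"
  fix t
  assume "t \<in> face_topes T ?B'"
  then have t: "t \<in> T" "B \<preceq> t"
    using sv_le_trans[OF sv_le_comp] by (auto simp: face_topes_def)
  then have "comp B (negv t) \<in> T"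
    using B by (simp add: tope_symmetric_def face_topes_def)
  then have "comp A (negv (comp B (negv t))) \<in> face_topes T B"
    using comp_negv_tope[OF A(1)] sv_le_comp_right[OF A(2)] by (simp add: face_topes_def)
  then have "comp B (negv (comp A (negv (comp B (negv t))))) \<in> T"
    using B by (simp add: tope_symmetric_def)
  moreover have "comp B (negv (comp A (negv (comp B (negv t))))) = comp ?B' (negv t)"
    by (simp add: negv_comp sv_comp_assoc sv_comp_absorb)
  ultimately show "comp ?B' (negv t) \<in> T"
    by simp
qed

lemma ex_new_support:
  assumes "B \<in> signvectors E" "A \<in> L" "B \<preceq> A" "A \<noteq> B"
  obtains g where "g \<in> E" "B g = Zero" "A g \<noteq> Zero"
proof -
  obtain g where "A g \<noteq> B g"
    using assms(4) by blast
  moreover have "B g = Zero"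
    using assms(3) calculation by (auto simp: sv_le_def)
  moreover have "g \<in> E"
    using assms(1) zero_outside[OF assms(2)] calculation by (auto simp: signvectors_def)
  ultimately show ?thesis
    using that by simp
qed

lemma elimination_shrinks_support:
  assumes A: "A \<in> L" "B \<preceq> A" and B': "comp B (negv A) \<in> L"
    and g: "g \<in> E" "B g = Zero" "A g \<noteq> Zero"
  obtains Z where "Z \<in> L" "B \<preceq> Z" "Z g = Zero" "\<And>e. Z e \<noteq> Zero \<Longrightarrow> A e \<noteq> Zero"
proof -
  let ?B' = "comp B (negv A)"
  have AB: "A e = B e" if "B e \<noteq> Zero" for e
    using A(2) that by (simp add: sv_le_def)
  have sep: "sep E A ?B' = {e \<in> E. B e = Zero \<and> A e \<noteq> Zero}"
    using AB by (auto simp: sep_def sign_mult_eq_Neg_iff comp_def negv_def)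
  obtain Z where Z: "Z \<in> L" "Z g = Zero" "\<And>f. f \<in> E - sep E A ?B' \<Longrightarrow> Z f = comp A ?B' f"
    using strong_elim[OF A(1) B'] g sep by blast
  have "B \<preceq> Z"
    unfolding sv_le_def
  proof (intro allI impI)
    fix e
    assume "B e \<noteq> Zero"
    moreover have "e \<in> E"
      using zero_outside[OF A(1)] AB calculation by fastforce
    ultimately show "Z e = B e"
      using Z(3)[of e] AB sep by (simp add: comp_def)
  qed
  moreover have "A e \<noteq> Zero" if "Z e \<noteq> Zero" for e
  proof (rule ccontr)
    assume "\<not> A e \<noteq> Zero"
    moreover have "e \<in> E"
      using zero_outside[OF Z(1)] that by blast
    ultimately have "Z e = comp A ?B' e"
      using Z(3) sep by simp
    with \<open>\<not> A e \<noteq> Zero\<close> that AB show False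
      by (auto simp: comp_def negv_def split: if_splits)
  qed
  ultimately show ?thesis
    using that Z by blast
qed

lemma mem_if_comp_negv_mem:
  assumes B: "B \<in> signvectors E" and A: "A \<in> L" "B \<preceq> A"
    and reflect: "\<And>A. A \<in> L \<Longrightarrow> B \<preceq> A \<Longrightarrow> A \<noteq> B \<Longrightarrow> comp B (negv A) \<in> L"
  shows "B \<in> L"
  using A
proof (induction "card {e \<in> E. B e = Zero \<and> A e \<noteq> Zero}" arbitrary: A rule: less_induct)
  case less
  show ?case
  proof (cases "A = B")
    case True
    then show ?thesis using less.prems by simp
  next
    case False
    obtain g where g: "g \<in> E" "B g = Zero" "A g \<noteq> Zero"
      using ex_new_support[OF B less.prems False] .
    obtain Z where Z: "Z \<in> L" "B \<preceq> Z" "Z g = Zero" "\<And>e. Z e \<noteq> Zero \<Longrightarrow> A e \<noteq> Zero"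
      using elimination_shrinks_support[OF less.prems reflect[OF less.prems False] g] by blast
    have "{e \<in> E. B e = Zero \<and> Z e \<noteq> Zero} \<subset> {e \<in> E. B e = Zero \<and> A e \<noteq> Zero}"
      using Z(3,4) g by blast
    then have "card {e \<in> E. B e = Zero \<and> Z e \<noteq> Zero} < card {e \<in> E. B e = Zero \<and> A e \<noteq> Zero}"
      using finite_E by (intro psubset_card_mono) simp_all
    then show ?thesis
      using less.hyps Z(1,2) by blast
  qed
qed

lemma tope_symmetric_imp_mem:
  assumes "B \<in> signvectors E" "tope_symmetric T B"
  shows "B \<in> L"
  using assms
proof (induction "card {e \<in> E. B e = Zero}" arbitrary: B rule: less_induct)
  case less
  obtain t where t: "t \<in> T" "B \<preceq> t"
    using less.prems(2) by (auto simp: tope_symmetric_def face_topes_def)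
  show ?case
  proof (rule mem_if_comp_negv_mem[OF less.prems(1) tope_in_L[OF t(1)] t(2)])
    fix A
    assume A: "A \<in> L" "B \<preceq> A" "A \<noteq> B"
    let ?B' = "comp B (negv A)"
    obtain g where g: "g \<in> E" "B g = Zero" "A g \<noteq> Zero"
      using ex_new_support[OF less.prems(1) A] .
    have "{e \<in> E. ?B' e = Zero} \<subset> {e \<in> E. B e = Zero}"
      using g by (auto simp: comp_def negv_def)
    then have "card {e \<in> E. ?B' e = Zero} < card {e \<in> E. B e = Zero}"
      using finite_E by (intro psubset_card_mono) simp_all
    moreover have "?B' \<in> signvectors E"
      using less.prems(1) zero_outside[OF A(1)] by (simp add: signvectors_def comp_def negv_def)
    ultimately show "?B' \<in> L"
      using less.hyps tope_symmetric_comp_negv[OF A(1,2) less.prems(2)] by blast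
  qed
qed

lemma L_eq_LG: "L = LG E T"
proof
  show "L \<subseteq> LG E T"
    using L_signvectors comp_negv_tope by (auto simp: LG_def)
next
  show "LG E T \<subseteq> L"
  proof
    fix X
    assume X: "X \<in> LG E T"
    obtain t where "t \<in> T"
      using topes_nonempty by blast
    with X have "comp X (negv t) \<in> face_topes T X"
      using sv_le_comp by (auto simp: LG_def face_topes_def)
    then have "tope_symmetric T X"
      using X by (auto simp: tope_symmetric_def LG_def face_topes_def)
    then show "X \<in> L"
      using X tope_symmetric_imp_mem by (simp add: LG_def)
  qed
qed

end

theorem mainTheorem2:
  fixes E :: "'e set" and L :: "('e \<Rightarrow> sign) set"
  assumes "finite E" and "E \<noteq> {}"
    and "L \<noteq> {}" and "L \<subseteq> signvectors E"
    and "COM E L" and "simple_svs E L"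
  shows "L = {Xsg E H | H. antipodal_sg (topes E L) H}
       \<and> {Xsg E H | H. antipodal_sg (topes E L) H}
           = {Xsg E H | H. antipodal_sg (topes E L) H \<and> gated_sg (topes E L) H}
       \<and> {Xsg E H | H. antipodal_sg (topes E L) H \<and> gated_sg (topes E L) H}
           = LG E (topes E L)
       \<and> (\<forall>H. antipodal_sg (topes E L) H \<longrightarrow> gated_sg (topes E L) H)"
proof -
  interpret simple_com E L
    using assms by unfold_locales simp_all
  have face: "antipodal_sg T (face_topes T X) \<and> gated_sg T (face_topes T X)
      \<and> Xsg E (face_topes T X) = X" if "X \<in> L" for X
    using antipodal_face_topes gated_face_topes Xsg_face_topes that by blast
  have antipodal: "Xsg E H \<in> L \<and> gated_sg T H" if "antipodal_sg T H" for H
    using antipodal_sg_face_topes[OF that] tope_symmetric_imp_mem[OF Xsg_signvectors]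
      gated_face_topes by metis
  have "L \<subseteq> {Xsg E H | H. antipodal_sg T H \<and> gated_sg T H}"
  proof
    fix X
    assume "X \<in> L"
    then show "X \<in> {Xsg E H | H. antipodal_sg T H \<and> gated_sg T H}"
      using face by (intro CollectI exI[of _ "face_topes T X"]) simp
  qed
  moreover have "{Xsg E H | H. antipodal_sg T H} \<subseteq> L"
    using antipodal by blast
  ultimately show ?thesis
    using antipodal L_eq_LG by blast
qed

end
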